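(* Let $n\ge2$, let $K\subset\mathbb{R}^n$ be compact and $f:K\to\mathbb{R}^m$ continuous. For any $\epsilon>0$ there exists $F:\mathbb{R}^n\to\mathbb{R}^m$ such that (1) $F$ is the feedforward function of a radial neural network with $2M(f,K,\epsilon/2)$ hidden layers whose widths are all $\max(n,m)$, and (2) $|F(x)-f(x)|<\epsilon$ for all $x\in K$.
   Context: $B_r(c)$ is the open ball. $M(f,K,\delta)$ is the minimal $M$ for which there exist $c_1,\dots,c_M\in K$, $r_1,\dots,r_M\in(0,1)$ with $K\subseteq\bigcup_iB_{r_i}(c_i)$, $f(B_{r_i}(c_i)\cap K)\subseteq B_\delta(f(c_i))$ for all $i$, and $|c_i-c_j|\ge r_i$ for all $i\ne j$. For $h:\mathbb{R}\to\mathbb{R}$ piecewise differentiable, the radial rescaling function $h^{(k)}(v)=h(|v|)v/|v|$ ($v\ne0$), $h^{(k)}(0)=0$. A radial neural network with widths $(n_0,\dots,n_L)$ has weights $W_i\in\mathbb{R}^{n_i\times n_{i-1}}$, biases $b_i$, radial rescaling functions $\rho_i$ on $\mathbb{R}^{n_i}$; hidden layers are $1,\dots,L-1$; feedforward function $F=F_L$, $F_0=\mathrm{id}$, $F_i(x)=\rho_i(W_iF_{i-1}(x)+b_i)$. *)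

theory Defs
  imports "HOL-Analysis.Analysis"
begin

text \<open>Piecewise differentiable real function: differentiable outside a finite set
  (no continuity required; discontinuous step-like rescalings are allowed).\<close>
definition piecewise_diff :: "(real \<Rightarrow> real) \<Rightarrow> bool" where
  "piecewise_diff h \<longleftrightarrow> (\<exists>S. finite S \<and> (\<forall>x. x \<notin> S \<longrightarrow> h differentiable (at x)))"

definition radial_rescale :: "(real \<Rightarrow> real) \<Rightarrow> 'a::real_normed_vector \<Rightarrow> 'a" where
  "radial_rescale h v = (if v = 0 then 0 else (h (norm v) / norm v) *\<^sub>R v)"

definition radial_fn :: "('a::real_normed_vector \<Rightarrow> 'a) \<Rightarrow> bool" where
  "radial_fn \<rho> \<longleftrightarrow> (\<exists>h. piecewise_diff h \<and> \<rho> = radial_rescale h)"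

definition layer :: "real^'a^'b \<Rightarrow> real^'b \<Rightarrow> (real^'b \<Rightarrow> real^'b) \<Rightarrow> real^'a \<Rightarrow> real^'b" where
  "layer W b \<rho> x = \<rho> (W *v x + b)"

text \<open>Composition of a list of square layers, first list element applied first.\<close>
definition comp_layers ::
  "((real^'k^'k) \<times> (real^'k) \<times> (real^'k \<Rightarrow> real^'k)) list \<Rightarrow> real^'k \<Rightarrow> real^'k" where
  "comp_layers ls = fold (\<lambda>(W, b, \<rho>) g. layer W b \<rho> \<circ> g) ls id"

text \<open>F : R^n \<rightarrow> R^m is the feedforward function of a radial neural network with
  H hidden layers, all of width CARD('k) (widths (n, k, ..., k, m), L = H + 1 layers).\<close>
definition radial_nn_hidden ::
  "'k::finite itself \<Rightarrow> nat \<Rightarrow> (real^'n \<Rightarrow> real^'m) \<Rightarrow> bool" where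
  "radial_nn_hidden _ H F \<longleftrightarrow>
     (if H = 0 then
        (\<exists>(W :: real^'n^'m) b \<rho>. radial_fn \<rho> \<and> F = layer W b \<rho>)
      else
        (\<exists>(W1 :: real^'n^'k) b1 \<rho>1
           (ls :: ((real^'k^'k) \<times> (real^'k) \<times> (real^'k \<Rightarrow> real^'k)) list)
           (WL :: real^'k^'m) bL \<rho>L.
           length ls = H - 1 \<and> radial_fn \<rho>1 \<and> radial_fn \<rho>L \<and>
           (\<forall>(W, b, \<rho>) \<in> set ls. radial_fn \<rho>) \<and>
           F = layer WL bL \<rho>L \<circ> comp_layers ls \<circ> layer W1 b1 \<rho>1))"

definition cover_ok :: "('a::metric_space \<Rightarrow> 'b::metric_space) \<Rightarrow> 'a set \<Rightarrow> real \<Rightarrow> nat \<Rightarrow> bool" where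
  "cover_ok f K \<delta> M \<longleftrightarrow>
     (\<exists>c r. (\<forall>i<M. c i \<in> K \<and> 0 < r i \<and> r i < 1) \<and>
            K \<subseteq> (\<Union>i<M. ball (c i) (r i)) \<and>
            (\<forall>i<M. f ` (ball (c i) (r i) \<inter> K) \<subseteq> ball (f (c i)) \<delta>) \<and>
            (\<forall>i<M. \<forall>j<M. i \<noteq> j \<longrightarrow> dist (c i) (c j) \<ge> r i))"

definition Mcov :: "('a::metric_space \<Rightarrow> 'b::metric_space) \<Rightarrow> 'a set \<Rightarrow> real \<Rightarrow> nat" where
  "Mcov f K \<delta> = (LEAST M. cover_ok f K \<delta> M)"

end

theory Submission
  imports Defs
begin

text \<open>Take an admissible cover of K by M = M(f, K, \<epsilon>/2) balls B(c_i, r_i) and embed R^n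
  isometrically into R^k. The i-th of the first M hidden layers is the radial rescaling centred
  at c_i that collapses B(c_i, r_i) onto its centre and fixes everything else; since
  |c_i - c_j| \<ge> r_i, points already collapsed onto earlier centres stay put, so afterwards every
  x in K sits at the first centre c_j whose ball contains it. Each of the next M layers alters the
  radial profile at a single radius, which moves one centre to a lift of f(c_j) (translated to
  avoid collisions) and fixes the finitely many other current points. A linear output layer
  projects back to R^m, so F(x) = f(c_j) and |f(c_j) - f(x)| < \<epsilon>/2.\<close>

lemma piecewise_diff_local:
  assumes "finite S"
    and "\<And>x. x \<notin> S \<Longrightarrow> \<exists>U g. open U \<and> x \<in> U \<and> g differentiable (at x) \<and> (\<forall>y\<in>U. h y = g y)"
  shows "piecewise_diff h"
proof -
  have "h differentiable (at x)" if x: "x \<notin> S" for x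
  proof -
    obtain U g where U: "open U" "x \<in> U" "g differentiable (at x)" "\<forall>y\<in>U. g y = h y"
      using assms(2)[OF x] by metis
    then obtain D where D: "(g has_derivative D) (at x)" unfolding differentiable_def by blast
    have "(h has_derivative D) (at x)"
      by (rule has_derivative_transform_within_open[OF D U(1,2)]) (use U(4) in simp)
    then show ?thesis unfolding differentiable_def by blast
  qed
  then show ?thesis unfolding piecewise_diff_def using assms(1) by blast
qed

lemma piecewise_diff_id: "piecewise_diff (\<lambda>s. s)"
  unfolding piecewise_diff_def by auto

lemma piecewise_diff_fun_upd:
  assumes "piecewise_diff h"
  shows "piecewise_diff (h(a := b))"
proof -
  obtain S where S: "finite S" "\<And>x. x \<notin> S \<Longrightarrow> h differentiable (at x)"
    using assms unfolding piecewise_diff_def by blast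
  show ?thesis
  proof (rule piecewise_diff_local[of "insert a S"])
    fix x assume "x \<notin> insert a S"
    then show "\<exists>U g. open U \<and> x \<in> U \<and> g differentiable (at x) \<and> (\<forall>y\<in>U. (h(a := b)) y = g y)"
      using S(2) by (intro exI[of _ "- {a}"] exI[of _ h]) auto
  qed (use S(1) in simp)
qed

lemma piecewise_diff_threshold: "piecewise_diff (\<lambda>s. if s < r then 0 else s)"
proof (rule piecewise_diff_local[of "{r}"])
  fix x :: real assume "x \<notin> {r}"
  then consider "x < r" | "r < x" by fastforce
  then show "\<exists>U g. open U \<and> x \<in> U \<and> g differentiable (at x) \<and>
      (\<forall>y\<in>U. (if y < r then 0 else y) = g y)"
  proof cases
    case 1
    then show ?thesis by (intro exI[of _ "{..<r}"] exI[of _ "\<lambda>_. 0"]) auto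
  next
    case 2
    then show ?thesis by (intro exI[of _ "{r<..}"] exI[of _ "\<lambda>y. y"]) auto
  qed
qed simp

lemma radial_rescale_id [simp]: "radial_rescale (\<lambda>s. s) v = v"
  unfolding radial_rescale_def by simp

lemma radial_fn_id: "radial_fn (\<lambda>v. v)"
  unfolding radial_fn_def using piecewise_diff_id by fastforce

lemma radial_rescale_fun_upd_other:
  assumes "norm v \<noteq> s"
  shows "radial_rescale ((\<lambda>s. s)(s := y)) v = v"
  using assms unfolding radial_rescale_def by simp

lemma radial_rescale_fun_upd_self:
  assumes "v \<noteq> 0"
  shows "radial_rescale ((\<lambda>s. s)(norm v := k * norm v)) v = k *\<^sub>R v"
  using assms unfolding radial_rescale_def by simp

definition centred_rescale :: "'a::real_normed_vector \<Rightarrow> (real \<Rightarrow> real) \<Rightarrow> 'a \<Rightarrow> 'a" where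
  "centred_rescale z h v = z + radial_rescale h (v - z)"

lemma centred_rescale_threshold:
  "centred_rescale c (\<lambda>s. if s < r then 0 else s) p = (if dist p c < r then c else p)"
  unfolding centred_rescale_def radial_rescale_def by (auto simp: dist_norm)

lemma exists_centred_rescale_moving_point:
  fixes p t :: "'a::real_normed_vector"
  assumes "p \<noteq> t" "finite Q" "p \<notin> Q"
  obtains z h where "piecewise_diff h" "centred_rescale z h p = t"
    "\<forall>q\<in>Q. centred_rescale z h q = q"
proof -
  obtain d where d: "0 < d" "\<forall>q\<in>Q. d \<le> dist p q"
    using finite_set_avoid[OF assms(2), of p] assms(3) by metis
  \<comment> \<open>Centre z beyond p on the ray from t through p, at distance s from p: then t - z is a
    positive multiple of p - z, and every point of Q is farther than s from z.\<close>
  define s where "s = d / 4"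
  define k where "k = (dist p t + s) / s"
  define z where "z = p + (s / dist p t) *\<^sub>R (p - t)"
  have "0 < s" "0 < dist p t" using d(1) assms(1) by (auto simp: s_def)
  have pz: "p - z = - (s / dist p t) *\<^sub>R (p - t)" by (simp add: z_def)
  then have norm_pz: "norm (p - z) = s"
    using \<open>0 < s\<close> \<open>0 < dist p t\<close> by (simp add: dist_norm)
  have "t - z = - (1 + s / dist p t) *\<^sub>R (p - t)" by (simp add: z_def algebra_simps)
  also have "\<dots> = - (k * (s / dist p t)) *\<^sub>R (p - t)"
  proof -
    have "k * (s / dist p t) = 1 + s / dist p t"
      using \<open>0 < s\<close> \<open>0 < dist p t\<close> by (simp add: k_def field_simps)
    then show ?thesis by simp
  qed
  also have "\<dots> = k *\<^sub>R (p - z)" by (simp add: pz)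
  finally have tz: "t - z = k *\<^sub>R (p - z)" .
  define h where "h = (\<lambda>u. u)(s := k * s)"
  have "piecewise_diff h" unfolding h_def by (intro piecewise_diff_fun_upd piecewise_diff_id)
  moreover have "centred_rescale z h p = t"
  proof -
    have "p - z \<noteq> 0" using norm_pz \<open>0 < s\<close> by auto
    then have "radial_rescale h (p - z) = t - z"
      using radial_rescale_fun_upd_self[of "p - z" k] by (simp add: h_def norm_pz tz)
    then show ?thesis by (simp add: centred_rescale_def)
  qed
  moreover have "centred_rescale z h q = q" if "q \<in> Q" for q
  proof -
    have "d \<le> dist p q" using d(2) that by blast
    also have "\<dots> \<le> dist p z + dist q z" by (rule dist_triangle2)
    finally have "d \<le> norm (q - z) + norm (p - z)" by (simp add: dist_norm)
    then have "norm (q - z) \<noteq> s" using norm_pz d(1) by (simp add: s_def)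
    then show ?thesis by (simp add: centred_rescale_def h_def radial_rescale_fun_upd_other)
  qed
  ultimately show ?thesis using that by blast
qed

definition snap :: "(nat \<Rightarrow> 'a::metric_space) \<Rightarrow> (nat \<Rightarrow> real) \<Rightarrow> nat \<Rightarrow> 'a \<Rightarrow> 'a" where
  "snap a r i p = (if \<exists>j<i. dist p (a j) < r j then a (LEAST j. dist p (a j) < r j) else p)"

lemma snap_0 [simp]: "snap a r 0 p = p"
  unfolding snap_def by simp

lemma snap_Suc:
  assumes "\<forall>j<i. r i \<le> dist (a i) (a j)"
  shows "snap a r (Suc i) p = centred_rescale (a i) (\<lambda>s. if s < r i then 0 else s) (snap a r i p)"
proof (cases "\<exists>j<i. dist p (a j) < r j")
  case True
  define J where "J = (LEAST j. dist p (a j) < r j)"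
  have "J < i" using True Least_le[of "\<lambda>j. dist p (a j) < r j"] unfolding J_def
    by (meson le_less_trans)
  then have "r i \<le> dist (a J) (a i)" using assms by (simp add: dist_commute)
  moreover have "\<exists>j<Suc i. dist p (a j) < r j" using True less_SucI by blast
  ultimately show ?thesis using True by (simp add: snap_def J_def not_less centred_rescale_threshold)
next
  case False
  then have least: "(LEAST j. dist p (a j) < r j) = i" if "dist p (a i) < r i"
    using that by (intro Least_equality) (auto simp: not_less[symmetric])
  have "(\<exists>j<Suc i. dist p (a j) < r j) \<longleftrightarrow> dist p (a i) < r i"
    using False by (auto simp: less_Suc_eq)
  then have "snap a r (Suc i) p = (if dist p (a i) < r i then a i else p)"
    unfolding snap_def using least by simp
  moreover have "snap a r i p = p" by (simp only: snap_def if_not_P[OF False])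
  ultimately show ?thesis by (simp add: centred_rescale_threshold)
qed

lemma snap_mem_ball:
  assumes "\<exists>j<i. dist p (a j) < r j"
  shows "\<exists>j<i. snap a r i p = a j \<and> dist p (a j) < r j"
proof -
  define J where "J = (LEAST j. dist p (a j) < r j)"
  have "dist p (a J) < r J" using assms unfolding J_def by (meson LeastI)
  moreover have "J < i" using assms Least_le[of "\<lambda>j. dist p (a j) < r j"] unfolding J_def
    by (meson le_less_trans)
  ultimately show ?thesis using assms by (auto simp: snap_def J_def)
qed

text \<open>A linear map followed by H hidden layers v \<mapsto> z + \<rho> (v - z): the translation by z is
  absorbed into the bias of the next layer, so such a chain is a stack of radial layers up to a
  final translation (\<open>radial_chain_Suc_layers\<close>).\<close>

inductive radial_chain :: "nat \<Rightarrow> (real^'n \<Rightarrow> real^'k) \<Rightarrow> bool" where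
  matrix: "radial_chain 0 (\<lambda>x. W *v x)"
| rescale: "radial_chain H P \<Longrightarrow> piecewise_diff h \<Longrightarrow>
    radial_chain (Suc H) (\<lambda>x. centred_rescale z h (P x))"

inductive_cases radial_chain_0E: "radial_chain 0 P"
inductive_cases radial_chain_SucE: "radial_chain (Suc H) P"

lemma comp_layers_snoc: "comp_layers (ls @ [(W, b, \<rho>)]) = layer W b \<rho> \<circ> comp_layers ls"
  unfolding comp_layers_def by simp

lemma radial_chain_Suc_layers:
  fixes P :: "real^'n \<Rightarrow> real^'k"
  assumes "radial_chain (Suc H) P"
  shows "\<exists>z (W1 :: real^'n^'k) b1 \<rho>1 ls. length ls = H \<and> radial_fn \<rho>1 \<and>
    (\<forall>(W, b, \<rho>) \<in> set ls. radial_fn \<rho>) \<and> (\<lambda>x. P x - z) = comp_layers ls \<circ> layer W1 b1 \<rho>1"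
  using assms
proof (induction H arbitrary: P)
  case 0
  then obtain P0 z h where "radial_chain 0 P0" and h: "piecewise_diff h"
    and P: "P = (\<lambda>x. centred_rescale z h (P0 x))"
    by (auto elim: radial_chain_SucE)
  then obtain W where P0: "P0 = (\<lambda>x. W *v x)" by (auto elim: radial_chain_0E)
  have "(\<lambda>x. P x - z) = comp_layers [] \<circ> layer W (- z) (radial_rescale h)"
    by (auto simp: P P0 centred_rescale_def layer_def comp_layers_def)
  moreover have "radial_fn (radial_rescale h)" using h unfolding radial_fn_def by blast
  ultimately show ?case by fastforce
next
  case (Suc H)
  then obtain P0 z h where "radial_chain (Suc H) P0" and h: "piecewise_diff h"
    and P: "P = (\<lambda>x. centred_rescale z h (P0 x))"
    by (auto elim: radial_chain_SucE)
  then obtain z0 W1 b1 \<rho>1 ls where ls: "length ls = H" "radial_fn \<rho>1"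
      "\<forall>(W, b, \<rho>) \<in> set ls. radial_fn \<rho>" and P0: "(\<lambda>x. P0 x - z0) = comp_layers ls \<circ> layer W1 b1 \<rho>1"
    using Suc.IH by blast
  define ls' where "ls' = ls @ [(mat 1, z0 - z, radial_rescale h)]"
  have "P0 x = comp_layers ls (layer W1 b1 \<rho>1 x) + z0" for x
    using fun_cong[OF P0, of x] by (simp add: algebra_simps)
  then have "(\<lambda>x. P x - z) = comp_layers ls' \<circ> layer W1 b1 \<rho>1"
    by (simp add: P ls'_def comp_layers_snoc layer_def fun_eq_iff centred_rescale_def algebra_simps)
  moreover have "radial_fn (radial_rescale h)" using h unfolding radial_fn_def by blast
  ultimately show ?case using ls
    by (intro exI[of _ z] exI[of _ W1] exI[of _ b1] exI[of _ \<rho>1] exI[of _ ls']) (auto simp: ls'_def)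
qed

lemma radial_nn_hidden_radial_chain:
  fixes P :: "real^'n \<Rightarrow> real^'k::finite" and Q :: "real^'k^'m"
  assumes "radial_chain H P"
  shows "radial_nn_hidden TYPE('k) H (\<lambda>x. Q *v P x + c)"
proof (cases H)
  case 0
  then obtain W where "P = (\<lambda>x. W *v x)" using assms by (auto elim: radial_chain_0E)
  then have "(\<lambda>x. Q *v P x + c) = layer (Q ** W) c (\<lambda>v. v)"
    by (auto simp: layer_def matrix_vector_mul_assoc)
  then show ?thesis using 0 radial_fn_id unfolding radial_nn_hidden_def by auto
next
  case (Suc H')
  then obtain z W1 b1 \<rho>1 ls where ls: "length ls = H'" "radial_fn \<rho>1"
      "\<forall>(W, b, \<rho>) \<in> set ls. radial_fn \<rho>" and P: "(\<lambda>x. P x - z) = comp_layers ls \<circ> layer W1 b1 \<rho>1"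
    using radial_chain_Suc_layers assms by blast
  have "P x = comp_layers ls (layer W1 b1 \<rho>1 x) + z" for x
    using fun_cong[OF P, of x] by (simp add: algebra_simps)
  then have "(\<lambda>x. Q *v P x + c) = layer Q (Q *v z + c) (\<lambda>v. v) \<circ> comp_layers ls \<circ> layer W1 b1 \<rho>1"
    by (simp add: layer_def fun_eq_iff matrix_vector_right_distrib)
  then show ?thesis using Suc ls radial_fn_id unfolding radial_nn_hidden_def by fastforce
qed

lemma radial_chain_snap:
  assumes "radial_chain H P" "\<forall>i<M. \<forall>j<i. r i \<le> dist (a i) (a j)"
  shows "radial_chain (H + M) (\<lambda>x. snap a r M (P x))"
  using assms(2)
proof (induction M)
  case 0
  then show ?case using assms(1) by simp
next
  case (Suc M)
  then have "radial_chain (Suc (H + M))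
      (\<lambda>x. centred_rescale (a M) (\<lambda>s. if s < r M then 0 else s) (snap a r M (P x)))"
    by (intro radial_chain.rescale piecewise_diff_threshold) auto
  then show ?case using Suc.prems by (simp add: snap_Suc)
qed

lemma exists_centred_rescale_relocation_step:
  fixes a t :: "nat \<Rightarrow> 'a::real_normed_vector"
  assumes "inj_on a {..<M}" "\<forall>i<M. \<forall>j<M. t i \<noteq> a j" "l < M"
  obtains z h where "piecewise_diff h"
    "\<forall>j<M. centred_rescale z h (if j < l then t j else a j) = (if j < Suc l then t j else a j)"
proof -
  define Q where "Q = t ` {..<l} \<union> a ` ({..<M} - {l})"
  have "a l \<notin> t ` {..<l}" using assms(2,3) by (metis imageE lessThan_iff order.strict_trans)
  moreover have "a l \<notin> a ` ({..<M} - {l})" using assms(1,3) by (auto dest: inj_onD)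
  ultimately have "a l \<notin> Q" unfolding Q_def by blast
  moreover have "a l \<noteq> t l" using assms(2,3) by metis
  moreover have "finite Q" unfolding Q_def by simp
  ultimately obtain z h where zh: "piecewise_diff h" "centred_rescale z h (a l) = t l"
    "\<forall>q\<in>Q. centred_rescale z h q = q"
    using exists_centred_rescale_moving_point by metis
  have "centred_rescale z h (if j < l then t j else a j) = (if j < Suc l then t j else a j)"
    if "j < M" for j
    using zh(2,3) that unfolding Q_def by (cases j l rule: linorder_cases) auto
  then show ?thesis using that zh(1) by blast
qed

lemma radial_chain_relocate:
  assumes "radial_chain H P" "inj_on a {..<M}" "\<forall>i<M. \<forall>j<M. t i \<noteq> a j"
  shows "\<exists>\<Phi>. radial_chain (H + M) (\<lambda>x. \<Phi> (P x)) \<and> (\<forall>j<M. \<Phi> (a j) = t j)"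
proof -
  have "\<exists>\<Phi>. radial_chain (H + l) (\<lambda>x. \<Phi> (P x)) \<and> (\<forall>j<M. \<Phi> (a j) = (if j < l then t j else a j))"
    if "l \<le> M" for l
    using that
  proof (induction l)
    case 0
    show ?case using assms(1) by (intro exI[of _ "\<lambda>p. p"]) simp
  next
    case (Suc l)
    then obtain \<Phi> where \<Phi>: "radial_chain (H + l) (\<lambda>x. \<Phi> (P x))"
      "\<forall>j<M. \<Phi> (a j) = (if j < l then t j else a j)" by auto
    obtain z h where zh: "piecewise_diff h"
      "\<forall>j<M. centred_rescale z h (if j < l then t j else a j) = (if j < Suc l then t j else a j)"
      using exists_centred_rescale_relocation_step[OF assms(2,3)] Suc.prems by (metis Suc_le_eq)
    have "radial_chain (H + Suc l) (\<lambda>x. centred_rescale z h (\<Phi> (P x)))"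
      using radial_chain.rescale[OF \<Phi>(1) zh(1)] by simp
    then show ?case using \<Phi>(2) zh(2) by (intro exI[of _ "\<lambda>p. centred_rescale z h (\<Phi> p)"]) auto
  qed
  from this[of M] show ?thesis by auto
qed

lemma exists_isometric_matrix:
  assumes "CARD('n::finite) \<le> CARD('k::finite)"
  obtains E :: "real^'n^'k" where "\<And>x. norm (E *v x) = norm x"
proof -
  obtain e :: "real^'n \<Rightarrow> real^'k" where e: "linear e" "\<And>x. norm (e x) = norm x"
    using isometry_subset_subspace[of "UNIV :: (real^'n) set" "UNIV :: (real^'k) set"] assms by auto
  have "matrix e *v x = e x" for x using fun_cong[OF matrix_vector_mul(2)[OF e(1)]] by simp
  then show ?thesis using e(2) by (intro that[of "matrix e"]) simp
qed

lemma exists_left_invertible_matrix: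
  assumes "CARD('m::finite) \<le> CARD('k::finite)"
  obtains Q :: "real^'k^'m" and L :: "real^'m^'k" where "Q ** L = mat 1"
proof -
  obtain L :: "real^'m^'k" where "\<And>y. norm (L *v y) = norm y"
    by (rule exists_isometric_matrix[OF assms]) (rule that)
  then have "\<forall>y. L *v y = 0 \<longrightarrow> y = 0" by (metis norm_eq_zero)
  then obtain Q where "Q ** L = mat 1" using matrix_left_invertible_ker by blast
  then show ?thesis by (rule that)
qed

lemma exists_translation_avoiding:
  fixes u a :: "nat \<Rightarrow> real^'k"
  obtains \<beta> where "\<forall>i<M. \<forall>j<M. u i + \<beta> \<noteq> a j"
proof -
  have "finite ((\<lambda>(i, j). a j - u i) ` ({..<M} \<times> {..<M}))" by simp
  then obtain \<beta> where "\<beta> \<notin> (\<lambda>(i, j). a j - u i) ` ({..<M} \<times> {..<M})"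
    using ex_new_if_finite[OF infinite_UNIV_vec[OF infinite_UNIV_char_0]] by blast
  then show ?thesis by (intro that) (force simp: algebra_simps)
qed

lemma card_separated_le_card_net:
  assumes "finite N" "S \<subseteq> (\<Union>y\<in>N. ball y (\<rho>/2))"
    and "\<forall>x\<in>S. \<forall>y\<in>S. x \<noteq> y \<longrightarrow> \<rho> \<le> dist x y"
  shows "card S \<le> card N"
proof -
  have near: "\<forall>s\<in>S. \<exists>y. y \<in> N \<and> dist y s < \<rho>/2" using assms(2) by fastforce
  obtain \<phi> where \<phi>: "\<forall>s\<in>S. \<phi> s \<in> N \<and> dist (\<phi> s) s < \<rho>/2"
    using bchoice[OF near] by blast
  have "inj_on \<phi> S"
  proof (rule inj_onI)
    fix x y assume xy: "x \<in> S" "y \<in> S" "\<phi> x = \<phi> y"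
    have "dist x y \<le> dist (\<phi> x) x + dist (\<phi> y) y" using dist_triangle3[of x y "\<phi> x"] xy(3) by simp
    also have "\<dots> < \<rho>"
    proof -
      have "dist (\<phi> x) x < \<rho>/2" "dist (\<phi> y) y < \<rho>/2" using \<phi> xy(1,2) by auto
      then show ?thesis by linarith
    qed
    finally show "x = y" using assms(3) xy(1,2) by force
  qed
  then show ?thesis using \<phi> assms(1) by (intro card_inj_on_le) auto
qed

lemma finite_separated_net:
  fixes K :: "'a::metric_space set"
  assumes "compact K" "0 < \<rho>"
  obtains S where "finite S" "S \<subseteq> K" "\<forall>x\<in>S. \<forall>y\<in>S. x \<noteq> y \<longrightarrow> \<rho> \<le> dist x y"
    "\<forall>x\<in>K. \<exists>s\<in>S. dist s x < \<rho>"
proof -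
  obtain N where N: "finite N" "K \<subseteq> (\<Union>y\<in>N. ball y (\<rho>/2))"
    using assms unfolding compact_eq_totally_bounded by (meson half_gt_zero)
  define separated where
    "separated S \<longleftrightarrow> finite S \<and> S \<subseteq> K \<and> (\<forall>x\<in>S. \<forall>y\<in>S. x \<noteq> y \<longrightarrow> \<rho> \<le> dist x y)" for S
  have "separated {}" by (simp add: separated_def)
  moreover have "\<forall>S. separated S \<longrightarrow> card S < card N + 1"
  proof (intro allI impI)
    fix S assume "separated S"
    then have "S \<subseteq> (\<Union>y\<in>N. ball y (\<rho>/2))" "\<forall>x\<in>S. \<forall>y\<in>S. x \<noteq> y \<longrightarrow> \<rho> \<le> dist x y"
      using N(2) unfolding separated_def by blast+
    then have "card S \<le> card N" by (rule card_separated_le_card_net[OF N(1)])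
    then show "card S < card N + 1" by simp
  qed
  ultimately obtain S where S: "separated S" "\<forall>S'. separated S' \<longrightarrow> card S' \<le> card S"
    using ex_has_greatest_nat[of separated "{}" card "card N + 1"] by blast
  have cov: "\<forall>x\<in>K. \<exists>s\<in>S. dist s x < \<rho>"
  proof
    fix x assume x: "x \<in> K"
    show "\<exists>s\<in>S. dist s x < \<rho>"
    proof (rule ccontr)
      assume far: "\<not> (\<exists>s\<in>S. dist s x < \<rho>)"
      then have "x \<notin> S" using assms(2) by force
      have "separated (insert x S)"
        using S(1) x far unfolding separated_def by (auto simp: dist_commute not_less)
      then have "card (insert x S) \<le> card S" using S(2) by blast
      moreover have "card (insert x S) = Suc (card S)"
        using \<open>x \<notin> S\<close> S(1) unfolding separated_def by simp
      ultimately show False by simp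
    qed
  qed
  from S(1) have "finite S" "S \<subseteq> K" "\<forall>x\<in>S. \<forall>y\<in>S. x \<noteq> y \<longrightarrow> \<rho> \<le> dist x y"
    unfolding separated_def by auto
  from that[OF this cov] show ?thesis .
qed

lemma cover_ok_of_separated_net:
  assumes S: "finite S" "S \<subseteq> K" "\<forall>x\<in>S. \<forall>y\<in>S. x \<noteq> y \<longrightarrow> \<rho> \<le> dist x y"
    "\<forall>x\<in>K. \<exists>s\<in>S. dist s x < \<rho>"
    and \<rho>: "0 < \<rho>" "\<rho> < 1"
    and osc: "\<forall>s\<in>S. \<forall>y\<in>K. dist s y < \<rho> \<longrightarrow> dist (f y) (f s) < \<delta>"
  shows "cover_ok f K \<delta> (card S)"
proof -
  obtain e where "bij_betw e {..<card S} S"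
    using ex_bij_betw_nat_finite[OF S(1)] by (auto simp: atLeast0LessThan)
  then have e_inj: "inj_on e {..<card S}" and eS: "e ` {..<card S} = S"
    by (simp_all add: bij_betw_def)
  have e_mem: "e i \<in> S" if "i < card S" for i
    using that eS by blast
  have e_onto: "\<exists>i<card S. e i = s" if "s \<in> S" for s
    using that eS by (metis imageE lessThan_iff)
  show ?thesis
    unfolding cover_ok_def
  proof (intro exI[of _ e] exI[of _ "\<lambda>_. \<rho>"] conjI allI impI)
    show "K \<subseteq> (\<Union>i<card S. ball (e i) \<rho>)"
    proof
      fix x assume "x \<in> K"
      then obtain s where "s \<in> S" "dist s x < \<rho>" using S(4) by blast
      moreover obtain i where "i < card S" "e i = s" using e_onto \<open>s \<in> S\<close> by blast
      ultimately show "x \<in> (\<Union>i<card S. ball (e i) \<rho>)" by auto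
    qed
    fix i assume i: "i < card S"
    show "e i \<in> K" using i e_mem S(2) by blast
    show "0 < \<rho>" "\<rho> < 1" using \<rho> by simp_all
    show "f ` (ball (e i) \<rho> \<inter> K) \<subseteq> ball (f (e i)) \<delta>"
    proof
      fix v assume "v \<in> f ` (ball (e i) \<rho> \<inter> K)"
      then obtain y where y: "y \<in> K" "dist (e i) y < \<rho>" "v = f y" by auto
      then have "dist (f y) (f (e i)) < \<delta>" using osc e_mem[OF i] by blast
      then show "v \<in> ball (f (e i)) \<delta>" using y(3) by (simp add: dist_commute)
    qed
    fix j assume j: "j < card S" "i \<noteq> j"
    then have "e i \<noteq> e j" using i e_inj by (auto dest: inj_onD)
    moreover have "e i \<in> S" "e j \<in> S" using i j e_mem by auto
    ultimately show "\<rho> \<le> dist (e i) (e j)" using S(3) by blast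
  qed
qed

lemma cover_ok_Mcov:
  fixes f :: "'a::metric_space \<Rightarrow> 'b::metric_space"
  assumes "compact K" "continuous_on K f" "0 < \<delta>"
  shows "cover_ok f K \<delta> (Mcov f K \<delta>)"
  unfolding Mcov_def
proof (rule LeastI_ex)
  obtain \<eta> where \<eta>: "0 < \<eta>" "\<forall>x\<in>K. \<forall>y\<in>K. dist y x < \<eta> \<longrightarrow> dist (f y) (f x) < \<delta>"
    using compact_uniformly_continuous[OF assms(2,1)] assms(3)
    unfolding uniformly_continuous_on_def by blast
  define \<rho> where "\<rho> = min \<eta> (1/2)"
  have \<rho>: "0 < \<rho>" "\<rho> < 1" "\<rho> \<le> \<eta>" using \<eta>(1) by (auto simp: \<rho>_def)
  obtain S where S: "finite S" "S \<subseteq> K" "\<forall>x\<in>S. \<forall>y\<in>S. x \<noteq> y \<longrightarrow> \<rho> \<le> dist x y"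
    "\<forall>x\<in>K. \<exists>s\<in>S. dist s x < \<rho>"
    by (rule finite_separated_net[OF assms(1) \<rho>(1)])
  have "\<forall>s\<in>S. \<forall>y\<in>K. dist s y < \<rho> \<longrightarrow> dist (f y) (f s) < \<delta>"
    using \<eta>(2) \<rho>(3) S(2) by (auto simp: dist_commute)
  from cover_ok_of_separated_net[OF S \<rho>(1,2) this]
  show "\<exists>M. cover_ok f K \<delta> M" by blast
qed

lemma radial_chain_quantize:
  fixes P :: "real^'n \<Rightarrow> real^'k"
  assumes chain: "radial_chain H P"
    and r: "\<forall>i<M. 0 < r i"
    and sep: "\<forall>i<M. \<forall>j<M. i \<noteq> j \<longrightarrow> r i \<le> dist (a i) (a j)"
    and t: "\<forall>i<M. \<forall>j<M. t i \<noteq> a j"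
  obtains G where "radial_chain (H + 2 * M) G"
    "\<And>x j. j < M \<Longrightarrow> dist (P x) (a j) < r j \<Longrightarrow> \<exists>i<M. dist (P x) (a i) < r i \<and> G x = t i"
proof -
  have "\<forall>i<M. \<forall>j<i. r i \<le> dist (a i) (a j)" using sep by simp
  from radial_chain_snap[OF chain this]
  have snapped: "radial_chain (H + M) (\<lambda>x. snap a r M (P x))" .
  have "inj_on a {..<M}"
  proof (rule inj_onI)
    fix i j assume ij: "i \<in> {..<M}" "j \<in> {..<M}" "a i = a j"
    show "i = j"
    proof (rule ccontr)
      assume "i \<noteq> j"
      then have "r i \<le> dist (a i) (a j)" "0 < r i" using ij(1,2) r sep by simp_all
      then show False using ij(3) by simp
    qed
  qed
  then obtain \<Phi> where \<Phi>: "radial_chain (H + M + M) (\<lambda>x. \<Phi> (snap a r M (P x)))"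
    "\<forall>j<M. \<Phi> (a j) = t j"
    using radial_chain_relocate[OF snapped _ t] by blast
  show ?thesis
  proof (rule that)
    show "radial_chain (H + 2 * M) (\<lambda>x. \<Phi> (snap a r M (P x)))"
      using \<Phi>(1) by (simp add: mult_2 add.assoc)
    fix x j assume "j < M" "dist (P x) (a j) < r j"
    then obtain i where "i < M" "snap a r M (P x) = a i" "dist (P x) (a i) < r i"
      using snap_mem_ball by blast
    then show "\<exists>i<M. dist (P x) (a i) < r i \<and> \<Phi> (snap a r M (P x)) = t i"
      using \<Phi>(2) by auto
  qed
qed

lemma radial_nn_approximation_on_cover:
  fixes f :: "real^'n \<Rightarrow> real^'m"
  assumes "cover_ok f K \<delta> M" "CARD('n) \<le> CARD('k::finite)" "CARD('m) \<le> CARD('k)"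
  obtains F where "radial_nn_hidden TYPE('k) (2 * M) F" "\<forall>x\<in>K. dist (F x) (f x) < \<delta>"
proof -
  obtain c r where c: "\<forall>i<M. c i \<in> K \<and> 0 < r i \<and> r i < 1"
    and cover: "K \<subseteq> (\<Union>i<M. ball (c i) (r i))"
    and osc: "\<forall>i<M. f ` (ball (c i) (r i) \<inter> K) \<subseteq> ball (f (c i)) \<delta>"
    and sep: "\<forall>i<M. \<forall>j<M. i \<noteq> j \<longrightarrow> r i \<le> dist (c i) (c j)"
    using assms(1) unfolding cover_ok_def by (elim exE conjE) (rule that)
  obtain E :: "real^'n^'k" where "\<And>x. norm (E *v x) = norm x"
    by (rule exists_isometric_matrix[OF assms(2)]) (rule that)
  then have E: "dist (E *v x) (E *v y) = dist x y" for x y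
    by (simp add: dist_norm flip: matrix_vector_mult_diff_distrib)
  obtain Q :: "real^'k^'m" and L :: "real^'m^'k" where QL: "Q ** L = mat 1"
    by (rule exists_left_invertible_matrix[OF assms(3)])
  define a where "a i = E *v c i" for i
  obtain \<beta> where \<beta>: "\<forall>i<M. \<forall>j<M. L *v f (c i) + \<beta> \<noteq> a j"
    by (rule exists_translation_avoiding)
  have "\<forall>i<M. \<forall>j<M. i \<noteq> j \<longrightarrow> r i \<le> dist (a i) (a j)" using sep by (simp add: a_def E)
  moreover have "\<forall>i<M. 0 < r i" using c by simp
  ultimately obtain G where G: "radial_chain (2 * M) G"
    "\<And>x j. j < M \<Longrightarrow> dist (E *v x) (a j) < r j \<Longrightarrow>
      \<exists>i<M. dist (E *v x) (a i) < r i \<and> G x = L *v f (c i) + \<beta>"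
    using radial_chain_quantize[OF radial_chain.matrix _ _ \<beta>] by (metis add_0)
  define F where "F x = Q *v G x + - (Q *v \<beta>)" for x
  have "radial_nn_hidden TYPE('k) (2 * M) F"
    unfolding F_def by (rule radial_nn_hidden_radial_chain[OF G(1)])
  moreover have "dist (F x) (f x) < \<delta>" if x: "x \<in> K" for x
  proof -
    obtain j where "j < M" "x \<in> ball (c j) (r j)" using cover x by blast
    then obtain i where i: "i < M" "dist (E *v x) (a i) < r i" "G x = L *v f (c i) + \<beta>"
      using G(2) by (auto simp: a_def E dist_commute)
    then have "x \<in> ball (c i) (r i)" by (simp add: a_def E dist_commute)
    then have "f x \<in> ball (f (c i)) \<delta>" using osc i(1) x by blast
    moreover have "F x = f (c i)"
      using i(3) by (simp add: F_def QL matrix_vector_right_distrib matrix_vector_mul_assoc)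
    ultimately show ?thesis by (simp add: dist_commute)
  qed
  ultimately show ?thesis using that by blast
qed

theorem theorem6:
  fixes K :: "(real^'n) set" and f :: "real^'n \<Rightarrow> real^'m" and \<epsilon> :: real
  assumes "CARD('n) \<ge> 2"
    and "compact K"
    and "continuous_on K f"
    and "\<epsilon> > 0"
    and "CARD('k::finite) = max CARD('n) CARD('m)"
  shows "\<exists>F. radial_nn_hidden TYPE('k) (2 * Mcov f K (\<epsilon> / 2)) F \<and>
             (\<forall>x\<in>K. norm (F x - f x) < \<epsilon>)"
proof -
  have "cover_ok f K (\<epsilon> / 2) (Mcov f K (\<epsilon> / 2))"
    using assms(4) by (intro cover_ok_Mcov[OF assms(2,3)]) simp
  moreover have "CARD('n) \<le> CARD('k)" "CARD('m) \<le> CARD('k)" using assms(5) by simp_all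
  ultimately obtain F where F: "radial_nn_hidden TYPE('k) (2 * Mcov f K (\<epsilon> / 2)) F"
    and close: "\<forall>x\<in>K. dist (F x) (f x) < \<epsilon> / 2"
    by (rule radial_nn_approximation_on_cover)
  have "\<forall>x\<in>K. norm (F x - f x) < \<epsilon>"
  proof
    fix x assume "x \<in> K"
    then have "norm (F x - f x) < \<epsilon> / 2" using close by (simp add: dist_norm)
    then show "norm (F x - f x) < \<epsilon>" using assms(4) by simp
  qed
  with F show ?thesis by blast
qed

end
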